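(* Let $K>0$ and let $\eta:[0,K]\to[0,\infty)$ be twice differentiable (one-sided at the endpoints) with $\eta(K)=0$, and set $\phi(k)=k\eta(k)$. Suppose (i) $\eta'(k)\le 0$ for all $k\in[0,K]$, and (ii) $k\eta''(k)+2\eta'(k)\le 0$ for all $k\in[0,K)$ (equivalently $\phi''(k)\le0$ for $k\in[0,K)$). Then for all $\Delta t,\Delta N>0$, the collision-free condition $$\frac{\Delta N}{\Delta t}\ge \sup_{k\in[0,K)}\frac{\phi(k)}{1-k/K}$$ holds if and only if the CFL condition $$\frac{\Delta N}{\Delta t}\ge \max_{k\in[0,K]}\left|-\eta'(k)k^2\right|$$ holds. In particular: for the Greenshields relation $\eta(k)=V(1-k/K)$ ($V>0$), both conditions are equivalent to $\Delta N/\Delta t\ge VK$; and for the triangular relation $\eta(k)=\min\{V,W(K/k-1)\}$ ($V,W>0$, with $\eta'$ taken wherever it exists), both conditions are equivalent to $\Delta N/\Delta t\ge WK$.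
   Context: $\eta$ is a speed-density relation, $\phi$ the corresponding flow-density relation (fundamental diagram), $K$ the jam density, $\Delta t$ a time step and $\Delta N$ a vehicle step. *)

theory Defs
  imports "HOL-Analysis.Analysis"
begin

definition flow :: "(real \<Rightarrow> real) \<Rightarrow> real \<Rightarrow> real" where
  "flow \<eta> k = k * \<eta> k"

definition collision_free :: "(real \<Rightarrow> real) \<Rightarrow> real \<Rightarrow> real \<Rightarrow> real \<Rightarrow> bool" where
  "collision_free \<eta> K \<Delta>t \<Delta>N \<longleftrightarrow>
     (\<forall>k\<in>{0..<K}. flow \<eta> k / (1 - k / K) \<le> \<Delta>N / \<Delta>t)"

definition cfl_cond :: "(real \<Rightarrow> real) \<Rightarrow> real \<Rightarrow> real \<Rightarrow> real \<Rightarrow> bool" where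
  "cfl_cond \<eta> K \<Delta>t \<Delta>N \<longleftrightarrow>
     (\<forall>k\<in>{0..K}. \<forall>d. (\<eta> has_real_derivative d) (at k within {0..K}) \<longrightarrow>
        \<bar>- d * k\<^sup>2\<bar> \<le> \<Delta>N / \<Delta>t)"

definition greenshields :: "real \<Rightarrow> real \<Rightarrow> real \<Rightarrow> real" where
  "greenshields V K k = V * (1 - k / K)"

text \<open>Triangular relation min{V, W(K/k - 1)}; at k = 0 the second branch is +infinity,
  so the value there is V.\<close>
definition triangular :: "real \<Rightarrow> real \<Rightarrow> real \<Rightarrow> real \<Rightarrow> real" where
  "triangular V W K k = (if k = 0 then V else min V (W * (K / k - 1)))"

end

theory Submission
  imports Defs
begin

text \<open>
  Both conditions reduce to the bound \<open>\<Delta>N/\<Delta>t \<ge> -\<eta>'(K) K\<^sup>2\<close>. Since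
  \<open>(-\<eta>'(k) k\<^sup>2)' = -k \<phi>''(k) \<ge> 0\<close>, the CFL quantity is nondecreasing and attains its maximum
  at the jam density. For the collision-free quotient \<open>\<phi>(k)/(1 - k/K) = K k \<eta>(k)/(K - k)\<close>,
  the same bound \<open>H = -\<eta>'(K) K\<^sup>2\<close> makes \<open>\<eta>(k) - H/k\<close> nondecreasing, which together with
  \<open>\<eta>(K) = 0\<close> gives quotient \<open>\<le> H\<close>; and the quotient tends to \<open>H\<close> as \<open>k \<rightarrow> K\<^sup>-\<close>, being
  \<open>-K k\<close> times a difference quotient of \<open>\<eta>\<close> at \<open>K\<close>. The triangular relation is not
  differentiable at the critical density, but the quotient and the CFL quantity can be
  computed branchwise and again have supremum \<open>WK\<close>, attained on the congested branch.
\<close>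

lemma has_real_derivative_unique_Icc:
  fixes f :: "real \<Rightarrow> real"
  assumes "a < b" "x \<in> {a..b}"
    and "(f has_real_derivative D) (at x within {a..b})"
    and "(f has_real_derivative E) (at x within {a..b})"
  shows "D = E"
  using assms by (intro has_field_derivative_unique[OF assms(3,4)]) (auto simp: trivial_limit_within)

lemma collision_free_iff_tendsto_bound:
  assumes "K > 0"
    and bound: "\<forall>k\<in>{0..<K}. flow \<eta> k / (1 - k / K) \<le> H"
    and lim: "((\<lambda>k. flow \<eta> k / (1 - k / K)) \<longlongrightarrow> H) (at_left K)"
  shows "collision_free \<eta> K \<Delta>t \<Delta>N \<longleftrightarrow> H \<le> \<Delta>N / \<Delta>t"
proof
  assume cf: "collision_free \<eta> K \<Delta>t \<Delta>N"
  have "\<forall>\<^sub>F k in at_left K. flow \<eta> k / (1 - k / K) \<le> \<Delta>N / \<Delta>t"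
    using eventually_at_left_real[OF \<open>K > 0\<close>]
    by eventually_elim (use cf in \<open>auto simp: collision_free_def\<close>)
  then show "H \<le> \<Delta>N / \<Delta>t"
    by (intro tendsto_le[OF trivial_limit_at_left_real tendsto_const lim])
next
  assume "H \<le> \<Delta>N / \<Delta>t"
  then show "collision_free \<eta> K \<Delta>t \<Delta>N"
    using bound by (auto simp: collision_free_def intro: order_trans)
qed

lemma cfl_cond_iff_attained_bound:
  assumes "K \<ge> 0"
    and bound: "\<forall>k\<in>{0..K}. \<forall>d. (\<eta> has_real_derivative d) (at k within {0..K}) \<longrightarrow> \<bar>- d * k\<^sup>2\<bar> \<le> H"
    and "(\<eta> has_real_derivative D) (at K within {0..K})" "\<bar>- D * K\<^sup>2\<bar> = H"
  shows "cfl_cond \<eta> K \<Delta>t \<Delta>N \<longleftrightarrow> H \<le> \<Delta>N / \<Delta>t"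
proof
  assume "cfl_cond \<eta> K \<Delta>t \<Delta>N"
  then show "H \<le> \<Delta>N / \<Delta>t"
    using assms(1,3,4) unfolding cfl_cond_def by auto
next
  assume "H \<le> \<Delta>N / \<Delta>t"
  then show "cfl_cond \<eta> K \<Delta>t \<Delta>N"
    using bound unfolding cfl_cond_def by (meson order_trans)
qed

lemma cfl_term_mono:
  fixes \<eta>' \<eta>'' :: "real \<Rightarrow> real"
  assumes d2: "\<forall>k\<in>{0..K}. (\<eta>' has_real_derivative \<eta>'' k) (at k within {0..K})"
    and ii: "\<forall>k\<in>{0..<K}. k * \<eta>'' k + 2 * \<eta>' k \<le> 0"
    and "0 \<le> a" "a \<le> b" "b \<le> K"
  shows "- \<eta>' a * a\<^sup>2 \<le> - \<eta>' b * b\<^sup>2"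
proof (rule DERIV_nonneg_imp_increasing_open[where f = "\<lambda>k. - \<eta>' k * k\<^sup>2"])
  have "continuous_on {0..K} \<eta>'"
    using d2 by (auto intro: DERIV_continuous_on)
  then show "continuous_on {a..b} (\<lambda>k. - \<eta>' k * k\<^sup>2)"
    using assms by (intro continuous_intros continuous_on_subset[where t = "{a..b}"]) auto
  fix x assume x: "a < x" "x < b"
  then have "(\<eta>' has_real_derivative \<eta>'' x) (at x within {0..K})"
    using d2 assms by auto
  then have "DERIV \<eta>' x :> \<eta>'' x"
    using x assms at_within_Icc_at[of 0 x K] by simp
  then have "DERIV (\<lambda>k. - \<eta>' k * k\<^sup>2) x :> - x * (x * \<eta>'' x + 2 * \<eta>' x)"
    by (auto intro!: derivative_eq_intros simp: algebra_simps power2_eq_square)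
  moreover have "- x * (x * \<eta>'' x + 2 * \<eta>' x) \<ge> 0"
    using ii x assms by (intro mult_nonpos_nonpos) auto
  ultimately show "\<exists>y. DERIV (\<lambda>k. - \<eta>' k * k\<^sup>2) x :> y \<and> y \<ge> 0"
    by blast
qed (use assms in auto)

lemma collision_quotient_le:
  fixes \<eta> \<eta>' :: "real \<Rightarrow> real"
  assumes "K > 0" "\<eta> K = 0"
    and d1: "\<forall>k\<in>{0..K}. (\<eta> has_real_derivative \<eta>' k) (at k within {0..K})"
    and bound: "\<forall>x\<in>{0<..<K}. - \<eta>' x * x\<^sup>2 \<le> H" and "H \<ge> 0"
    and k: "k \<in> {0..<K}"
  shows "flow \<eta> k / (1 - k / K) \<le> H"
proof (cases "k = 0")
  case True
  then show ?thesis using \<open>H \<ge> 0\<close> by (simp add: flow_def)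
next
  case False
  with k have kp: "0 < k" "k < K" by auto
  have "\<eta> k - H / k \<le> \<eta> K - H / K"
  proof (rule DERIV_nonneg_imp_increasing_open[where f = "\<lambda>s. \<eta> s - H / s"])
    have "continuous_on {0..K} \<eta>"
      using d1 by (auto intro: DERIV_continuous_on)
    then show "continuous_on {k..K} (\<lambda>s. \<eta> s - H / s)"
      using kp by (intro continuous_intros continuous_on_subset[where t = "{k..K}"]) auto
    fix x assume x: "k < x" "x < K"
    then have "(\<eta> has_real_derivative \<eta>' x) (at x within {0..K})"
      using d1 kp by auto
    then have "DERIV \<eta> x :> \<eta>' x"
      using x kp at_within_Icc_at[of 0 x K] by simp
    then have "DERIV (\<lambda>s. \<eta> s - H / s) x :> \<eta>' x + H / x\<^sup>2"
      using x kp by (auto intro!: derivative_eq_intros simp: power2_eq_square)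
    moreover have "- \<eta>' x * x\<^sup>2 \<le> H"
      using bound x kp by simp
    then have "\<eta>' x + H / x\<^sup>2 \<ge> 0"
      using x kp by (simp add: field_simps)
    ultimately show "\<exists>y. DERIV (\<lambda>s. \<eta> s - H / s) x :> y \<and> y \<ge> 0"
      by blast
  qed (use kp in auto)
  then have "k * \<eta> k \<le> H * (K - k) / K"
    using kp \<open>\<eta> K = 0\<close> by (simp add: field_simps)
  then show ?thesis
    using kp by (simp add: flow_def field_simps)
qed

lemma collision_quotient_tendsto:
  fixes \<eta> :: "real \<Rightarrow> real"
  assumes "K > 0" "\<eta> K = 0" "(\<eta> has_real_derivative D) (at K within {0..K})"
  shows "((\<lambda>k. flow \<eta> k / (1 - k / K)) \<longlongrightarrow> - D * K\<^sup>2) (at_left K)"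
proof -
  have "((\<lambda>k. (\<eta> k - \<eta> K) / (k - K)) \<longlongrightarrow> D) (at_left K)"
    using assms(3) at_within_Icc_at_left[OF \<open>K > 0\<close>] by (simp add: has_field_derivative_iff)
  then have "((\<lambda>k. - K * k * ((\<eta> k - \<eta> K) / (k - K))) \<longlongrightarrow> - K * K * D) (at_left K)"
    by (intro tendsto_intros) (auto intro: tendsto_ident_at)
  moreover have "\<forall>\<^sub>F k in at_left K. - K * k * ((\<eta> k - \<eta> K) / (k - K)) = flow \<eta> k / (1 - k / K)"
    using eventually_at_left_real[OF \<open>K > 0\<close>]
    by eventually_elim (use assms in \<open>auto simp: flow_def field_simps\<close>)
  ultimately show ?thesis
    by (auto simp: power2_eq_square algebra_simps elim: Lim_transform_eventually)
qed

lemma concave_flow_conditions_iff: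
  fixes \<eta> \<eta>' \<eta>'' :: "real \<Rightarrow> real"
  assumes "K > 0" "\<eta> K = 0"
    and d1: "\<forall>k\<in>{0..K}. (\<eta> has_real_derivative \<eta>' k) (at k within {0..K})"
    and d2: "\<forall>k\<in>{0..K}. (\<eta>' has_real_derivative \<eta>'' k) (at k within {0..K})"
    and i: "\<forall>k\<in>{0..K}. \<eta>' k \<le> 0"
    and ii: "\<forall>k\<in>{0..<K}. k * \<eta>'' k + 2 * \<eta>' k \<le> 0"
  shows "collision_free \<eta> K \<Delta>t \<Delta>N \<longleftrightarrow> - \<eta>' K * K\<^sup>2 \<le> \<Delta>N / \<Delta>t"
    and "cfl_cond \<eta> K \<Delta>t \<Delta>N \<longleftrightarrow> - \<eta>' K * K\<^sup>2 \<le> \<Delta>N / \<Delta>t"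
proof -
  have d1K: "(\<eta> has_real_derivative \<eta>' K) (at K within {0..K})"
    using d1 \<open>K > 0\<close> by auto
  have cfl_term_nonneg: "- \<eta>' k * k\<^sup>2 \<ge> 0" if "k \<in> {0..K}" for k
    using i that by (simp add: mult_nonpos_nonneg)
  have cfl_term_le: "- \<eta>' k * k\<^sup>2 \<le> - \<eta>' K * K\<^sup>2" if "k \<in> {0..K}" for k
    using cfl_term_mono[OF d2 ii] that by auto
  show "collision_free \<eta> K \<Delta>t \<Delta>N \<longleftrightarrow> - \<eta>' K * K\<^sup>2 \<le> \<Delta>N / \<Delta>t"
  proof (rule collision_free_iff_tendsto_bound[OF \<open>K > 0\<close>])
    show "\<forall>k\<in>{0..<K}. flow \<eta> k / (1 - k / K) \<le> - \<eta>' K * K\<^sup>2"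
      using collision_quotient_le[OF \<open>K > 0\<close> \<open>\<eta> K = 0\<close> d1] cfl_term_le cfl_term_nonneg \<open>K > 0\<close>
      by auto
    show "((\<lambda>k. flow \<eta> k / (1 - k / K)) \<longlongrightarrow> - \<eta>' K * K\<^sup>2) (at_left K)"
      using collision_quotient_tendsto[OF \<open>K > 0\<close> \<open>\<eta> K = 0\<close> d1K] .
  qed
  show "cfl_cond \<eta> K \<Delta>t \<Delta>N \<longleftrightarrow> - \<eta>' K * K\<^sup>2 \<le> \<Delta>N / \<Delta>t"
  proof (rule cfl_cond_iff_attained_bound[OF _ _ d1K])
    show "\<forall>k\<in>{0..K}. \<forall>d. (\<eta> has_real_derivative d) (at k within {0..K}) \<longrightarrow>
        \<bar>- d * k\<^sup>2\<bar> \<le> - \<eta>' K * K\<^sup>2"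
    proof (intro ballI allI impI)
      fix k d
      assume k: "k \<in> {0..K}" and "(\<eta> has_real_derivative d) (at k within {0..K})"
      then have "d = \<eta>' k"
        using has_real_derivative_unique_Icc[OF \<open>K > 0\<close>] d1 by blast
      then show "\<bar>- d * k\<^sup>2\<bar> \<le> - \<eta>' K * K\<^sup>2"
        using cfl_term_le[OF k] cfl_term_nonneg[OF k] by simp
    qed
    show "\<bar>- \<eta>' K * K\<^sup>2\<bar> = - \<eta>' K * K\<^sup>2"
      using cfl_term_nonneg \<open>K > 0\<close> by simp
  qed (use \<open>K > 0\<close> in simp)
qed

lemma greenshields_conditions_iff:
  assumes "K > 0" "V > 0"
  shows "collision_free (greenshields V K) K \<Delta>t \<Delta>N \<longleftrightarrow> V * K \<le> \<Delta>N / \<Delta>t"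
    and "cfl_cond (greenshields V K) K \<Delta>t \<Delta>N \<longleftrightarrow> V * K \<le> \<Delta>N / \<Delta>t"
proof -
  have jam: "greenshields V K K = 0"
    using \<open>K > 0\<close> by (simp add: greenshields_def)
  have d1: "\<forall>k\<in>{0..K}. (greenshields V K has_real_derivative - V / K) (at k within {0..K})"
    unfolding greenshields_def using \<open>K > 0\<close> by (auto intro!: derivative_eq_intros)
  have d2: "\<forall>k\<in>{0..K}. ((\<lambda>_. - V / K) has_real_derivative 0) (at k within {0..K})"
    by simp
  have i: "\<forall>k\<in>{0..K}. - V / K \<le> 0" and ii: "\<forall>k\<in>{0..<K}. k * 0 + 2 * (- V / K) \<le> 0"
    using assms by simp_all
  have "- (- V / K) * K\<^sup>2 = V * K"
    using \<open>K > 0\<close> by (simp add: power2_eq_square)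
  then show "collision_free (greenshields V K) K \<Delta>t \<Delta>N \<longleftrightarrow> V * K \<le> \<Delta>N / \<Delta>t"
    and "cfl_cond (greenshields V K) K \<Delta>t \<Delta>N \<longleftrightarrow> V * K \<le> \<Delta>N / \<Delta>t"
    using concave_flow_conditions_iff[where \<eta>' = "\<lambda>_. - V / K" and \<eta>'' = "\<lambda>_. 0",
        OF \<open>K > 0\<close> jam d1 d2 i ii]
    by simp_all
qed

text \<open>The density at which the free-flow branch \<open>V\<close> meets the congested branch \<open>W (K/k - 1)\<close>.\<close>

definition critical_density :: "real \<Rightarrow> real \<Rightarrow> real \<Rightarrow> real" where
  "critical_density V W K = W * K / (V + W)"

context
  fixes V W K :: real
  assumes V: "V > 0" and W: "W > 0" and K: "K > 0"
begin

lemma critical_density_bounds: "0 < critical_density V W K" "critical_density V W K < K"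
  using V W K by (simp_all add: critical_density_def field_simps)

lemma triangular_free_flow:
  assumes "0 \<le> k" "k \<le> critical_density V W K"
  shows "triangular V W K k = V"
proof (cases "k = 0")
  case False
  with assms have "0 < k" by simp
  then have "V \<le> W * (K / k - 1)"
    using assms V W by (simp add: critical_density_def field_simps)
  then show ?thesis
    by (simp add: triangular_def)
qed (use assms in \<open>auto simp: triangular_def\<close>)

lemma triangular_congested:
  assumes "critical_density V W K \<le> k"
  shows "triangular V W K k = W * (K / k - 1)"
proof -
  have "0 < k"
    using assms critical_density_bounds by linarith
  moreover from this have "W * (K / k - 1) \<le> V"
    using assms V W by (simp add: critical_density_def field_simps)
  ultimately show ?thesis
    by (simp add: triangular_def)
qed

lemma triangular_has_derivative_free_flow:
  assumes "k \<in> {0..critical_density V W K}"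
  shows "(triangular V W K has_real_derivative 0) (at k within {0..critical_density V W K})"
  by (rule has_field_derivative_transform_within[where f = "\<lambda>_. V" and d = 1])
    (use assms triangular_free_flow in auto)

lemma triangular_has_derivative_congested:
  assumes "k \<in> {critical_density V W K..K}"
  shows "(triangular V W K has_real_derivative - W * K / k\<^sup>2) (at k within {critical_density V W K..K})"
proof (rule has_field_derivative_transform_within[where f = "\<lambda>x. W * (K / x - 1)" and d = 1])
  have "0 < k"
    using assms critical_density_bounds by auto
  then show "((\<lambda>x. W * (K / x - 1)) has_real_derivative - W * K / k\<^sup>2)
      (at k within {critical_density V W K..K})"
    by (auto intro!: derivative_eq_intros simp: power2_eq_square)
qed (use assms triangular_congested in auto)

lemma triangular_cfl_term_le:
  assumes k: "k \<in> {0..K}" and d: "(triangular V W K has_real_derivative d) (at k within {0..K})"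
  shows "\<bar>- d * k\<^sup>2\<bar> \<le> W * K"
proof (cases "k \<le> critical_density V W K")
  case True
  then have k': "k \<in> {0..critical_density V W K}"
    using k by simp
  have "(triangular V W K has_real_derivative d) (at k within {0..critical_density V W K})"
    using critical_density_bounds by (intro DERIV_subset[OF d]) auto
  from has_real_derivative_unique_Icc[OF critical_density_bounds(1) k' this
      triangular_has_derivative_free_flow[OF k']]
  have "d = 0" .
  then show ?thesis
    using W K by simp
next
  case False
  then have k': "k \<in> {critical_density V W K..K}"
    using k by simp
  have "(triangular V W K has_real_derivative d) (at k within {critical_density V W K..K})"
    using critical_density_bounds by (intro DERIV_subset[OF d]) auto
  from has_real_derivative_unique_Icc[OF critical_density_bounds(2) k' this
      triangular_has_derivative_congested[OF k']]
  have "d = - W * K / k\<^sup>2" .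
  moreover have "0 < k"
    using False critical_density_bounds by linarith
  ultimately show ?thesis
    using W K by simp
qed

lemma triangular_collision_quotient_le:
  assumes "k \<in> {0..<K}"
  shows "flow (triangular V W K) k / (1 - k / K) \<le> W * K"
proof (cases "k = 0")
  case False
  with assms have k: "0 < k" "k < K" by auto
  have "triangular V W K k \<le> W * (K / k - 1)"
    using False by (simp add: triangular_def)
  then have "k * triangular V W K k \<le> k * (W * (K / k - 1))"
    using k by (simp add: mult_left_mono)
  also have "\<dots> = W * (K - k)"
    using k by (simp add: field_simps)
  finally have "flow (triangular V W K) k \<le> W * (K - k)"
    by (simp add: flow_def)
  then have "K * flow (triangular V W K) k / (K - k) \<le> K * (W * (K - k)) / (K - k)"
    using k K by (intro divide_right_mono mult_left_mono) auto
  moreover have "1 - k / K = (K - k) / K"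
    using K by (simp add: field_simps)
  ultimately show ?thesis
    using k by (simp add: mult.commute)
qed (use W K in \<open>simp add: flow_def\<close>)

lemma triangular_collision_quotient_congested:
  assumes "k \<in> {critical_density V W K..<K}"
  shows "flow (triangular V W K) k / (1 - k / K) = W * K"
proof -
  have k: "0 < k" "k < K"
    using assms critical_density_bounds by auto
  then have "flow (triangular V W K) k = W * (K - k)"
    using assms triangular_congested[of k] by (simp add: flow_def field_simps)
  moreover have "1 - k / K = (K - k) / K"
    using K by (simp add: field_simps)
  ultimately show ?thesis
    using k by simp
qed

lemma triangular_conditions_iff:
  shows "collision_free (triangular V W K) K \<Delta>t \<Delta>N \<longleftrightarrow> W * K \<le> \<Delta>N / \<Delta>t"
    and "cfl_cond (triangular V W K) K \<Delta>t \<Delta>N \<longleftrightarrow> W * K \<le> \<Delta>N / \<Delta>t"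
proof -
  show "collision_free (triangular V W K) K \<Delta>t \<Delta>N \<longleftrightarrow> W * K \<le> \<Delta>N / \<Delta>t"
  proof (rule collision_free_iff_tendsto_bound[OF K])
    show "\<forall>k\<in>{0..<K}. flow (triangular V W K) k / (1 - k / K) \<le> W * K"
      using triangular_collision_quotient_le by blast
    have "\<forall>\<^sub>F k in at_left K. W * K = flow (triangular V W K) k / (1 - k / K)"
      using eventually_at_left_real[OF critical_density_bounds(2)]
      by eventually_elim (simp add: triangular_collision_quotient_congested)
    then show "((\<lambda>k. flow (triangular V W K) k / (1 - k / K)) \<longlongrightarrow> W * K) (at_left K)"
      by (rule Lim_transform_eventually[OF tendsto_const])
  qed
  have "K \<in> {critical_density V W K..K}"
    using critical_density_bounds by simp
  then have "(triangular V W K has_real_derivative - W * K / K\<^sup>2) (at K within {0..K})"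
    using triangular_has_derivative_congested[of K] critical_density_bounds K
    by (simp add: at_within_Icc_at_left)
  then show "cfl_cond (triangular V W K) K \<Delta>t \<Delta>N \<longleftrightarrow> W * K \<le> \<Delta>N / \<Delta>t"
    by (rule cfl_cond_iff_attained_bound[rotated 2])
      (use triangular_cfl_term_le K W in \<open>auto simp: power2_eq_square\<close>)
qed

end

theorem theorem4p3:
  fixes \<eta> \<eta>' \<eta>'' :: "real \<Rightarrow> real" and K :: real
  assumes K_pos: "K > 0"
    and nonneg: "\<forall>k\<in>{0..K}. \<eta> k \<ge> 0"
    and eta_K: "\<eta> K = 0"
    and d1: "\<forall>k\<in>{0..K}. (\<eta> has_real_derivative \<eta>' k) (at k within {0..K})"
    and d2: "\<forall>k\<in>{0..K}. (\<eta>' has_real_derivative \<eta>'' k) (at k within {0..K})"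
    and i: "\<forall>k\<in>{0..K}. \<eta>' k \<le> 0"
    and ii: "\<forall>k\<in>{0..<K}. k * \<eta>'' k + 2 * \<eta>' k \<le> 0"
  shows "(\<forall>\<Delta>t \<Delta>N. \<Delta>t > 0 \<longrightarrow> \<Delta>N > 0 \<longrightarrow>
            (collision_free \<eta> K \<Delta>t \<Delta>N \<longleftrightarrow> cfl_cond \<eta> K \<Delta>t \<Delta>N))
       \<and> (\<forall>V \<Delta>t \<Delta>N. V > 0 \<longrightarrow> \<Delta>t > 0 \<longrightarrow> \<Delta>N > 0 \<longrightarrow>
            (collision_free (greenshields V K) K \<Delta>t \<Delta>N \<longleftrightarrow> \<Delta>N / \<Delta>t \<ge> V * K)
          \<and> (cfl_cond (greenshields V K) K \<Delta>t \<Delta>N \<longleftrightarrow> \<Delta>N / \<Delta>t \<ge> V * K))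
       \<and> (\<forall>V W \<Delta>t \<Delta>N. V > 0 \<longrightarrow> W > 0 \<longrightarrow> \<Delta>t > 0 \<longrightarrow> \<Delta>N > 0 \<longrightarrow>
            (collision_free (triangular V W K) K \<Delta>t \<Delta>N \<longleftrightarrow> \<Delta>N / \<Delta>t \<ge> W * K)
          \<and> (cfl_cond (triangular V W K) K \<Delta>t \<Delta>N \<longleftrightarrow> \<Delta>N / \<Delta>t \<ge> W * K))"
  using concave_flow_conditions_iff[OF K_pos eta_K d1 d2 i ii]
    greenshields_conditions_iff[OF K_pos] triangular_conditions_iff[OF _ _ K_pos]
  by simp

end
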